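(* $\displaystyle \liminf_{n\to\infty}\frac{p(n,3)}{s(n,3)} > 1.$
   Context: $p(n,3)$ denotes the number of paving matroids of rank $3$ on the ground set $[n]=\{1,\dots,n\}$ (rank-$3$ matroids all of whose circuits have at least $3$ elements), and $s(n,3)$ denotes the number of sparse paving matroids of rank $3$ on $[n]$ (rank-$3$ matroids in which every $3$-subset of $[n]$ is either a basis or a circuit-hyperplane). *)

theory Defs
  imports Complex_Main "HOL-Library.Extended_Real" "HOL-Library.Liminf_Limsup"
begin

text \<open>A matroid on a finite ground set E is represented by its set of bases \<B>.\<close>
definition matroid_bases :: "'a set \<Rightarrow> 'a set set \<Rightarrow> bool" where
  "matroid_bases E \<B> \<longleftrightarrow> \<B> \<noteq> {} \<and> (\<forall>B\<in>\<B>. B \<subseteq> E) \<and>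
     (\<forall>B1\<in>\<B>. \<forall>B2\<in>\<B>. \<forall>x\<in>B1 - B2. \<exists>y\<in>B2 - B1. insert y (B1 - {x}) \<in> \<B>)"

definition indep :: "'a set set \<Rightarrow> 'a set \<Rightarrow> bool" where
  "indep \<B> X \<longleftrightarrow> (\<exists>B\<in>\<B>. X \<subseteq> B)"

definition circuit :: "'a set \<Rightarrow> 'a set set \<Rightarrow> 'a set \<Rightarrow> bool" where
  "circuit E \<B> C \<longleftrightarrow> C \<subseteq> E \<and> \<not> indep \<B> C \<and> (\<forall>D. D \<subset> C \<longrightarrow> indep \<B> D)"

definition mrank :: "'a set set \<Rightarrow> 'a set \<Rightarrow> nat" where
  "mrank \<B> X = Max {card I | I. I \<subseteq> X \<and> indep \<B> I}"

definition has_rank :: "'a set set \<Rightarrow> nat \<Rightarrow> bool" where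
  "has_rank \<B> r \<longleftrightarrow> (\<forall>B\<in>\<B>. card B = r)"

definition hyperplane :: "'a set \<Rightarrow> 'a set set \<Rightarrow> nat \<Rightarrow> 'a set \<Rightarrow> bool" where
  "hyperplane E \<B> r H \<longleftrightarrow> H \<subseteq> E \<and> mrank \<B> H = r - 1 \<and>
     (\<forall>e\<in>E - H. mrank \<B> (insert e H) > mrank \<B> H)"

definition paving :: "'a set \<Rightarrow> 'a set set \<Rightarrow> nat \<Rightarrow> bool" where
  "paving E \<B> r \<longleftrightarrow> (\<forall>C. circuit E \<B> C \<longrightarrow> card C \<ge> r)"

definition sparse_paving :: "'a set \<Rightarrow> 'a set set \<Rightarrow> nat \<Rightarrow> bool" where
  "sparse_paving E \<B> r \<longleftrightarrow> (\<forall>X. X \<subseteq> E \<and> card X = r \<longrightarrow>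
      X \<in> \<B> \<or> (circuit E \<B> X \<and> hyperplane E \<B> r X))"

definition p_count :: "nat \<Rightarrow> nat \<Rightarrow> nat" where
  "p_count n r = card {\<B>. matroid_bases {1..n} \<B> \<and> has_rank \<B> r \<and> paving {1..n} \<B> r}"

definition s_count :: "nat \<Rightarrow> nat \<Rightarrow> nat" where
  "s_count n r = card {\<B>. matroid_bases {1..n} \<B> \<and> has_rank \<B> r \<and> sparse_paving {1..n} \<B> r}"

end

(*
  A rank-3 matroid is sparse paving exactly when its non-bases form a linear family of triples
  (any two share at most one point); conversely, every linear family of proper subsets ("lines")
  of the ground set gives a rank-3 paving matroid whose bases are the triples on no line. Hence
  s(n,3) is at most the number of linear triple systems on [n], while p(n,3) is at least that
  number plus the number of extensions: systems in which one triple T is enlarged by a point x to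
  the four-point line T \<union> {x} and the triples meeting this line twice are discarded. Distinct
  systems of either kind give distinct matroids.

  It remains to show that extensions are at least 10^-7 times as numerous as linear triple
  systems. A system with k < n^2/200 triples can be enlarged by a triple in about n^3/6 ways, so
  the number of systems of size k at least doubles while k < n^2/200, and the average size of a
  linear triple system is at least n^2/400. A system H has |H|(n - 3) distinct extensions,
  whereas an extension G comes from at most 4(6n + 1)^3 systems: H is determined by G, the triple
  T inside the four-point line, and the at most three triples of H meeting that line twice.
*)

theory Submission
  imports Defs
begin

lemma obtain_insert_of_card_Suc:
  assumes "P \<subseteq> X" "finite X" "card X = Suc (card P)"
  obtains a where "a \<notin> P" "X = insert a P"
proof -
  have "card (X - P) = 1"
    using assms by (simp add: card_Diff_subset finite_subset)
  then obtain a where "X - P = {a}" by (auto simp: card_Suc_eq)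
  with assms(1) show ?thesis using that by blast
qed

lemma double_counting_le:
  assumes "finite A" "finite B"
    and "\<And>a. a \<in> A \<Longrightarrow> f a \<le> card {b \<in> B. R a b}"
    and "\<And>b. b \<in> B \<Longrightarrow> card {a \<in> A. R a b} \<le> d"
  shows "(\<Sum>a\<in>A. f a) \<le> card B * d"
proof -
  have card_eq: "card {y \<in> Y. P y} = (\<Sum>y\<in>Y. if P y then 1 else 0)"
    if "finite Y" for Y and P :: "'c \<Rightarrow> bool"
    using that by (simp add: sum.If_cases Int_def)
  have "(\<Sum>a\<in>A. f a) \<le> (\<Sum>a\<in>A. card {b \<in> B. R a b})" using assms(3) by (rule sum_mono)
  also have "\<dots> = (\<Sum>b\<in>B. card {a \<in> A. R a b})"
    using assms(1,2) by (simp add: card_eq sum.swap[of _ A B])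
  also have "\<dots> \<le> (\<Sum>b\<in>B. d)" using assms(4) by (rule sum_mono)
  finally show ?thesis by simp
qed

lemma card_subsets_card_le:
  assumes "finite C"
  shows "card {D. D \<subseteq> C \<and> card D \<le> k} \<le> (card C + 1) ^ k"
proof -
  have "{D. D \<subseteq> C \<and> card D \<le> k} = (\<Union>j\<le>k. {D. D \<subseteq> C \<and> card D = j})" by auto
  then have "card {D. D \<subseteq> C \<and> card D \<le> k} \<le> (\<Sum>j\<le>k. card {D. D \<subseteq> C \<and> card D = j})"
    by (simp only:) (rule card_UN_le, simp)
  also have "\<dots> = (\<Sum>j\<le>k. card C choose j)" using n_subsets[OF assms] by simp
  also have "\<dots> \<le> (\<Sum>j\<le>k. (k choose j) * card C ^ j * 1 ^ (k - j))"
  proof (rule sum_mono)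
    fix j assume "j \<in> {..k}"
    then have "1 \<le> k choose j" by (simp add: Suc_leI)
    have "card C choose j \<le> card C ^ j"
      by (cases "j \<le> card C") (simp_all add: binomial_le_pow binomial_eq_0)
    also have "\<dots> \<le> (k choose j) * card C ^ j"
      using mult_le_mono1[OF \<open>1 \<le> k choose j\<close>] by simp
    finally show "card C choose j \<le> (k choose j) * card C ^ j * 1 ^ (k - j)" by simp
  qed
  also have "\<dots> = (card C + 1) ^ k" using binomial[of "card C" 1 k] by simp
  finally show ?thesis .
qed

section \<open>Linear families of triples\<close>

definition triples :: "'a set \<Rightarrow> 'a set set" where
  "triples E = {X. X \<subseteq> E \<and> card X = 3}"

definition linear_family :: "'a set set \<Rightarrow> bool" where
  "linear_family H \<longleftrightarrow> (\<forall>X\<in>H. \<forall>Y\<in>H. X \<noteq> Y \<longrightarrow> card (X \<inter> Y) \<le> 1)"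

lemma triplesD: "X \<in> triples E \<Longrightarrow> X \<subseteq> E \<and> finite X \<and> card X = 3"
  unfolding triples_def by (auto intro: card_ge_0_finite)

lemma finite_triples: "finite E \<Longrightarrow> finite (triples E)"
  unfolding triples_def by (rule finite_subset[of _ "Pow E"]) auto

lemma card_triples: "finite E \<Longrightarrow> card (triples E) = card E choose 3"
  unfolding triples_def by (rule n_subsets)

lemma linear_familyD:
  "linear_family H \<Longrightarrow> X \<in> H \<Longrightarrow> Y \<in> H \<Longrightarrow> X \<noteq> Y \<Longrightarrow> card (X \<inter> Y) \<le> 1"
  unfolding linear_family_def by blast

lemma linear_family_subset: "linear_family H \<Longrightarrow> H' \<subseteq> H \<Longrightarrow> linear_family H'"
  unfolding linear_family_def by blast

lemma linear_family_insert:
  "linear_family (insert L H) \<longleftrightarrow> linear_family H \<and> (\<forall>Y\<in>H. Y \<noteq> L \<longrightarrow> card (Y \<inter> L) \<le> 1)"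
  unfolding linear_family_def by (auto simp: Int_commute)

lemma linear_family_unique_line:
  assumes "linear_family Ls" "l1 \<in> Ls" "l2 \<in> Ls" "finite l1"
    and "P \<subseteq> l1" "P \<subseteq> l2" "2 \<le> card P"
  shows "l1 = l2"
proof (rule ccontr)
  assume "l1 \<noteq> l2"
  then have "card (l1 \<inter> l2) \<le> 1" using assms linear_familyD by blast
  moreover have "card P \<le> card (l1 \<inter> l2)" using assms by (intro card_mono) auto
  ultimately show False using assms(7) by linarith
qed

lemma card_Int_insert_le: "finite T \<Longrightarrow> card (Y \<inter> insert x T) \<le> Suc (card (Y \<inter> T))"
  by (simp add: Int_insert_right card_insert_if)

lemma card_triples_through_pair:
  assumes "finite E" "card P = 2"
  shows "card {T \<in> triples E. P \<subseteq> T} \<le> card E"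
proof -
  have "finite P" using assms(2) by (intro card_ge_0_finite) simp
  have "{T \<in> triples E. P \<subseteq> T} \<subseteq> (\<lambda>c. insert c P) ` E"
  proof
    fix T assume T: "T \<in> {T \<in> triples E. P \<subseteq> T}"
    then have "T \<subseteq> E" "finite T" "card T = Suc (card P)" using triplesD assms(2) by auto
    then obtain c where "T = insert c P" using T obtain_insert_of_card_Suc[of P T] by blast
    with \<open>T \<subseteq> E\<close> show "T \<in> (\<lambda>c. insert c P) ` E" by blast
  qed
  then have "card {T \<in> triples E. P \<subseteq> T} \<le> card ((\<lambda>c. insert c P) ` E)"
    using assms(1) by (intro card_mono) simp_all
  also have "\<dots> \<le> card E" using assms(1) by (rule card_image_le)
  finally show ?thesis .
qed

lemma card_triples_meeting_in_two:
  assumes "finite E" "finite X"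
  shows "card {T \<in> triples E. 2 \<le> card (X \<inter> T)} \<le> (card X choose 2) * card E"
proof -
  let ?pairs = "{P. P \<subseteq> X \<and> card P = 2}"
  have "{T \<in> triples E. 2 \<le> card (X \<inter> T)} \<subseteq> (\<Union>P\<in>?pairs. {T \<in> triples E. P \<subseteq> T})"
  proof
    fix T assume "T \<in> {T \<in> triples E. 2 \<le> card (X \<inter> T)}"
    then have "T \<in> triples E" "2 \<le> card (X \<inter> T)" by simp_all
    moreover obtain P where "P \<subseteq> X \<inter> T" "card P = 2"
      using obtain_subset_with_card_n[OF \<open>2 \<le> card (X \<inter> T)\<close>] by metis
    ultimately show "T \<in> (\<Union>P\<in>?pairs. {T \<in> triples E. P \<subseteq> T})" by blast
  qed
  then have "card {T \<in> triples E. 2 \<le> card (X \<inter> T)}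
      \<le> card (\<Union>P\<in>?pairs. {T \<in> triples E. P \<subseteq> T})"
    by (intro card_mono finite_subset[OF _ finite_triples[OF assms(1)]]) blast+
  also have "\<dots> \<le> (\<Sum>P\<in>?pairs. card {T \<in> triples E. P \<subseteq> T})"
    using assms(2) by (intro card_UN_le) simp
  also have "\<dots> \<le> (\<Sum>P\<in>?pairs. card E)"
    using card_triples_through_pair[OF assms(1)] by (intro sum_mono) blast
  also have "\<dots> = (card X choose 2) * card E"
    using n_subsets[OF assms(2), of 2] by simp
  finally show ?thesis .
qed

lemma two_triples_in_4set_meet:
  assumes "finite T1" "finite T2" "card T1 = 3" "card T2 = 3" "card (T1 \<union> T2) \<le> 4"
  shows "2 \<le> card (T1 \<inter> T2)"
  using card_Un_Int[OF assms(1,2)] assms(3-5) by linarith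

lemma card_Diff_two_points_of_4set:
  assumes "card L = 4" "a \<in> L" "b \<in> L" "a \<noteq> b"
  shows "card ((L - {a}) \<inter> (L - {b})) = 2"
proof -
  have "(L - {a}) \<inter> (L - {b}) = L - {a, b}" by auto
  moreover have "finite L" using assms(1) by (intro card_ge_0_finite) simp
  ultimately show ?thesis using assms by (simp add: card_Diff_subset)
qed

lemma delete_point_of_4set: "card L = 4 \<Longrightarrow> a \<in> L \<Longrightarrow> L - {a} \<in> triples L"
  unfolding triples_def by auto

lemma other_point_of_4set:
  assumes "card L = 4" "a \<in> L"
  obtains b where "b \<in> L" "b \<noteq> a"
proof -
  have "card (L - {a}) = 3" using assms by simp
  then have "L - {a} \<noteq> {}" by (metis card.empty zero_neq_numeral)
  then show ?thesis using that by blast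
qed

lemma triples_of_4set_not_linear:
  assumes "card L = 4" "triples L \<subseteq> H"
  shows "\<not> linear_family H"
proof
  assume lin: "linear_family H"
  obtain a where a: "a \<in> L" using assms(1) by fastforce
  obtain b where b: "b \<in> L" "b \<noteq> a" using other_point_of_4set[OF assms(1) a] .
  have "L - {a} \<in> H" "L - {b} \<in> H" "L - {a} \<noteq> L - {b}"
    using delete_point_of_4set[OF assms(1)] assms(2) a b by blast+
  then have "card ((L - {a}) \<inter> (L - {b})) \<le> 1" using lin linear_familyD by blast
  then show False using card_Diff_two_points_of_4set[OF assms(1) a b(1)] b(2) by simp
qed

lemma triples_of_4set_subset:
  assumes lin: "linear_family H" and far: "\<forall>Y\<in>H. card (Y \<inter> L1) \<le> 1"
    and c1: "card L1 = 4" and c2: "card L2 = 4"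
    and sub: "triples L2 \<subseteq> H \<union> triples L1"
  shows "L2 \<subseteq> L1"
proof -
  have del: "L2 - {a} \<subseteq> L1" if a: "a \<in> L2" for a
  proof (rule ccontr)
    assume "\<not> L2 - {a} \<subseteq> L1"
    then have inH: "L2 - {a} \<in> H"
      using delete_point_of_4set[OF c2 a] sub unfolding triples_def by blast
    obtain b where b: "b \<in> L2" "b \<noteq> a" using other_point_of_4set[OF c2 a] .
    have meet: "card ((L2 - {a}) \<inter> (L2 - {b})) = 2"
      using card_Diff_two_points_of_4set[OF c2 a b(1)] b(2) by simp
    have "L2 - {b} \<in> H \<or> L2 - {b} \<subseteq> L1"
      using delete_point_of_4set[OF c2 b(1)] sub unfolding triples_def by blast
    then show False
    proof
      assume "L2 - {b} \<in> H"
      moreover have "L2 - {a} \<noteq> L2 - {b}" using a b by blast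
      ultimately show False using linear_familyD[OF lin inH] meet by fastforce
    next
      assume "L2 - {b} \<subseteq> L1"
      have "finite L1" using c1 by (intro card_ge_0_finite) simp
      then have "card ((L2 - {a}) \<inter> (L2 - {b})) \<le> card ((L2 - {a}) \<inter> L1)"
        using \<open>L2 - {b} \<subseteq> L1\<close> by (intro card_mono) auto
      then show False using far inH meet by fastforce
    qed
  qed
  show ?thesis
  proof
    fix z assume z: "z \<in> L2"
    obtain a where "a \<in> L2" "a \<noteq> z" using other_point_of_4set[OF c2 z] .
    with del z show "z \<in> L1" by blast
  qed
qed

section \<open>Paving matroids from partial linear spaces\<close>

definition line_bases :: "'a set \<Rightarrow> 'a set set \<Rightarrow> 'a set set" where
  "line_bases E Ls = {B \<in> triples E. \<forall>l\<in>Ls. \<not> B \<subseteq> l}"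

locale partial_linear_space =
  fixes E :: "'a set" and Ls :: "'a set set"
  assumes finite_ground: "finite E"
    and three_le_card: "3 \<le> card E"
    and line_proper: "l \<in> Ls \<Longrightarrow> l \<subset> E"
    and linear: "linear_family Ls"
begin

lemma finite_line: "l \<in> Ls \<Longrightarrow> finite l"
  using line_proper finite_ground by (meson finite_subset less_imp_le)

lemma collinear_with_pair:
  assumes "card P = 2" "y0 \<in> S - P" "\<And>y. y \<in> S - P \<Longrightarrow> \<exists>l\<in>Ls. P \<subseteq> l \<and> y \<in> l"
  obtains l where "l \<in> Ls" "S \<subseteq> l"
proof -
  obtain l0 where l0: "l0 \<in> Ls" "P \<subseteq> l0" "y0 \<in> l0" using assms(2,3) by blast
  have "y \<in> l0" if y: "y \<in> S - P" for y
  proof -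
    obtain l where l: "l \<in> Ls" "P \<subseteq> l" "y \<in> l" using assms(3)[OF y] by blast
    then have "l = l0"
      using linear_family_unique_line[OF linear l(1) l0(1) finite_line[OF l(1)]] l0(2) assms(1)
      by simp
    with l show ?thesis by blast
  qed
  then have "S \<subseteq> l0" using l0(2) by blast
  with l0(1) show ?thesis by (rule that)
qed

lemma pair_extends_to_basis:
  assumes P: "P \<subseteq> E" "card P = 2"
  shows "\<exists>c. insert c P \<in> line_bases E Ls"
proof (rule ccontr)
  assume none: "\<not> ?thesis"
  have "finite P" using P finite_ground finite_subset by blast
  have on_line: "\<exists>l\<in>Ls. P \<subseteq> l \<and> c \<in> l" if c: "c \<in> E - P" for c
  proof -
    have "c \<notin> P" "c \<in> E" using c by simp_all
    then have "card (insert c P) = 3" using P(2) \<open>finite P\<close> by simp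
    then have "insert c P \<in> triples E" using \<open>c \<in> E\<close> P(1) unfolding triples_def by simp
    moreover have "insert c P \<notin> line_bases E Ls" using none by blast
    ultimately show ?thesis unfolding line_bases_def by blast
  qed
  have "card (E - P) \<ge> 1" using P three_le_card \<open>finite P\<close> by (simp add: card_Diff_subset)
  then obtain c0 where "c0 \<in> E - P" by (metis card.empty ex_in_conv not_one_le_zero)
  then obtain l where "l \<in> Ls" "E \<subseteq> l" using collinear_with_pair P(2) on_line by metis
  then show False using line_proper by blast
qed

lemma line_bases_matroid: "matroid_bases E (line_bases E Ls)"
  unfolding matroid_bases_def
proof (intro conjI ballI)
  obtain P where "P \<subseteq> E" "card P = 2"
    using obtain_subset_with_card_n[of 2 E] three_le_card by auto
  then show "line_bases E Ls \<noteq> {}" using pair_extends_to_basis by blast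
next
  fix B assume "B \<in> line_bases E Ls"
  then show "B \<subseteq> E" unfolding line_bases_def triples_def by blast
next
  fix B1 B2 x assume B1: "B1 \<in> line_bases E Ls" and B2: "B2 \<in> line_bases E Ls"
    and x: "x \<in> B1 - B2"
  define P where "P = B1 - {x}"
  have t1: "B1 \<subseteq> E" "finite B1" "card B1 = 3" and t2: "B2 \<subseteq> E" "finite B2" "card B2 = 3"
    using B1 B2 triplesD unfolding line_bases_def by blast+
  have cP: "card P = 2" using t1 x unfolding P_def by auto
  have "\<not> B2 \<subseteq> B1"
  proof
    assume "B2 \<subseteq> B1"
    then have "B2 = B1" using card_subset_eq[OF t1(2)] t1(3) t2(3) by simp
    with x show False by blast
  qed
  then obtain y0 where y0: "y0 \<in> B2 - B1" by blast
  have "B2 - P = B2 - B1" using x unfolding P_def by auto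
  have "\<exists>y\<in>B2 - B1. \<forall>l\<in>Ls. P \<subseteq> l \<longrightarrow> y \<notin> l"
  proof (rule ccontr)
    assume "\<not> ?thesis"
    then obtain l where "l \<in> Ls" "B2 \<subseteq> l"
      using collinear_with_pair[OF cP, of y0 B2] y0 \<open>B2 - P = B2 - B1\<close> by auto
    then show False using B2 unfolding line_bases_def by blast
  qed
  then obtain y where y: "y \<in> B2 - B1" "\<forall>l\<in>Ls. P \<subseteq> l \<longrightarrow> y \<notin> l" by blast
  have "insert y P \<in> line_bases E Ls"
    using y cP t1 t2 x unfolding line_bases_def triples_def P_def by auto
  with y show "\<exists>y\<in>B2 - B1. insert y (B1 - {x}) \<in> line_bases E Ls" unfolding P_def by blast
qed

lemma indep_small:
  assumes "S \<subseteq> E" "card S \<le> 2"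
  shows "indep (line_bases E Ls) S"
proof -
  have "2 \<le> card E" using three_le_card by linarith
  then obtain P where "S \<subseteq> P" "P \<subseteq> E" "card P = 2"
    using exists_subset_between[OF assms(2) _ assms(1) finite_ground] by blast
  moreover obtain c where "insert c P \<in> line_bases E Ls"
    using pair_extends_to_basis \<open>P \<subseteq> E\<close> \<open>card P = 2\<close> by blast
  ultimately show ?thesis unfolding indep_def by blast
qed

lemma line_bases_paving: "paving E (line_bases E Ls) 3"
  unfolding paving_def circuit_def
proof (intro allI impI)
  fix C assume "C \<subseteq> E \<and> \<not> indep (line_bases E Ls) C \<and> (\<forall>D\<subset>C. indep (line_bases E Ls) D)"
  then show "3 \<le> card C" using indep_small[of C] by linarith
qed

end

lemma has_rank_line_bases: "has_rank (line_bases E Ls) 3"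
  unfolding has_rank_def line_bases_def triples_def by auto

lemma line_bases_nonbases:
  assumes "\<B> \<subseteq> triples E"
  shows "line_bases E (triples E - \<B>) = \<B>"
proof (intro set_eqI iffI)
  fix B assume "B \<in> line_bases E (triples E - \<B>)"
  then show "B \<in> \<B>" unfolding line_bases_def by blast
next
  fix B assume B: "B \<in> \<B>"
  have "B = l" if "l \<in> triples E" "B \<subseteq> l" for l
    using that B assms triplesD[of l E] triplesD[of B E] card_subset_eq[of l B] by auto
  with B assms show "B \<in> line_bases E (triples E - \<B>)" unfolding line_bases_def by blast
qed

lemma triples_diff_line_bases:
  "triples E - line_bases E Ls = {X \<in> triples E. \<exists>l\<in>Ls. X \<subseteq> l}"
  unfolding line_bases_def by blast

lemma triples_diff_line_bases_triples:
  assumes "H \<subseteq> triples E"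
  shows "triples E - line_bases E H = H"
proof -
  have "X = l" if "X \<in> triples E" "l \<in> H" "X \<subseteq> l" for X l
  proof -
    have "l \<in> triples E" using that assms by blast
    then show ?thesis using that triplesD card_subset_eq by metis
  qed
  then show ?thesis unfolding triples_diff_line_bases using assms by blast
qed

lemma triples_diff_line_bases_insert:
  assumes "L \<subseteq> E"
  shows "triples E - line_bases E (insert L Ls) = (triples E - line_bases E Ls) \<union> triples L"
  using assms unfolding line_bases_def triples_def by auto

section \<open>Sparse paving matroids of rank 3\<close>

lemma mrank_attained:
  assumes "finite Z" "\<B> \<noteq> {}"
  obtains I where "I \<subseteq> Z" "indep \<B> I" "card I = mrank \<B> Z"
proof -
  have "mrank \<B> Z \<in> {card I |I. I \<subseteq> Z \<and> indep \<B> I}"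
    unfolding mrank_def
  proof (rule Max_in)
    show "finite {card I |I. I \<subseteq> Z \<and> indep \<B> I}"
      by (rule finite_subset[of _ "card ` Pow Z"]) (use assms(1) in auto)
    have "indep \<B> {}" using assms(2) unfolding indep_def by blast
    then show "{card I |I. I \<subseteq> Z \<and> indep \<B> I} \<noteq> {}" by blast
  qed
  then obtain I where "I \<subseteq> Z" "indep \<B> I" "mrank \<B> Z = card I" by blast
  with that show ?thesis by simp
qed

lemma hyperplane_insert_contains_basis:
  assumes "has_rank \<B> r" "0 < r" "\<B> \<noteq> {}" "hyperplane E \<B> r X" "finite X" "b \<in> E - X"
  obtains B where "B \<in> \<B>" "B \<subseteq> insert b X"
proof -
  have "mrank \<B> X = r - 1" "mrank \<B> X < mrank \<B> (insert b X)"
    using assms(4,6) unfolding hyperplane_def by blast+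
  then have "r \<le> mrank \<B> (insert b X)" by linarith
  moreover obtain I where I: "I \<subseteq> insert b X" "indep \<B> I" "card I = mrank \<B> (insert b X)"
    using mrank_attained[of "insert b X" \<B>] assms(3,5) by blast
  moreover obtain B where B: "B \<in> \<B>" "I \<subseteq> B" using I(2) unfolding indep_def by blast
  moreover have "card B = r" "finite B"
    using assms(1,2) B(1) unfolding has_rank_def by (auto intro: card_ge_0_finite)
  ultimately have "I = B" using card_seteq by metis
  with B I show ?thesis using that by blast
qed

lemma sparse_paving_nonbases_linear:
  assumes M: "matroid_bases E \<B>" and R: "has_rank \<B> 3" and S: "sparse_paving E \<B> 3"
  shows "linear_family (triples E - \<B>)"
  unfolding linear_family_def
proof (intro ballI impI, rule ccontr)
  fix X Y assume X: "X \<in> triples E - \<B>" and Y: "Y \<in> triples E - \<B>" and "X \<noteq> Y"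
    and "\<not> card (X \<inter> Y) \<le> 1"
  \<comment> \<open>Write X = P \<union> {a}, Y = P \<union> {b}. Since X is a hyperplane, X \<union> {b} contains a basis B;
     exchanging towards B from a basis P \<union> {w} would make X or Y a basis.\<close>
  define P where "P = X \<inter> Y"
  have tX: "X \<subseteq> E" "finite X" "card X = 3" and tY: "Y \<subseteq> E" "finite Y" "card Y = 3"
    using X Y triplesD by blast+
  have "card P \<noteq> 3"
    using card_subset_eq[OF tX(2), of P] card_subset_eq[OF tY(2), of P] tX tY \<open>X \<noteq> Y\<close>
    unfolding P_def by auto
  moreover have "card P \<le> 3" using card_mono[OF tX(2), of P] tX unfolding P_def by auto
  ultimately have cP: "card P = 2" using \<open>\<not> card (X \<inter> Y) \<le> 1\<close> unfolding P_def by linarith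
  obtain a where a: "a \<notin> P" "X = insert a P"
    using obtain_insert_of_card_Suc[of P X] tX cP unfolding P_def by auto
  obtain b where b: "b \<notin> P" "Y = insert b P"
    using obtain_insert_of_card_Suc[of P Y] tY cP unfolding P_def by auto
  have "circuit E \<B> X" "hyperplane E \<B> 3 X"
    using S X tX unfolding sparse_paving_def by auto
  have "\<B> \<noteq> {}" using M unfolding matroid_bases_def by blast
  have "indep \<B> P" using \<open>circuit E \<B> X\<close> a unfolding circuit_def by blast
  then obtain B0 where B0: "B0 \<in> \<B>" "P \<subseteq> B0" unfolding indep_def by blast
  have "finite B0" "card B0 = 3"
    using R B0(1) unfolding has_rank_def by (auto intro: card_ge_0_finite)
  then obtain w where w: "w \<notin> P" "B0 = insert w P"
    using obtain_insert_of_card_Suc[OF B0(2)] cP by auto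
  have "b \<in> E - X" using b tY unfolding P_def by auto
  then obtain B where B: "B \<in> \<B>" "B \<subseteq> insert b X"
    using hyperplane_insert_contains_basis[OF R _ \<open>\<B> \<noteq> {}\<close> \<open>hyperplane E \<B> 3 X\<close> tX(2)]
    by auto
  have "w \<noteq> a" "w \<noteq> b" using w a b X Y B0(1) by auto
  then have "w \<in> B0 - B" using w B a by auto
  then obtain y where y: "y \<in> B - B0" "insert y (B0 - {w}) \<in> \<B>"
    using M B0(1) B(1) unfolding matroid_bases_def by blast
  have "B0 - {w} = P" using w by auto
  moreover have "y = a \<or> y = b" using y B a w by auto
  ultimately show False using y(2) a b X Y by auto
qed

section \<open>Extending a linear triple system by a four-point line\<close>

definition linear_triple_systems :: "'a set \<Rightarrow> 'a set set set" where
  "linear_triple_systems E = {H. H \<subseteq> triples E \<and> linear_family H}"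

definition add_line :: "'a set \<Rightarrow> 'a set set \<Rightarrow> 'a set set" where
  "add_line L H = insert L {Y \<in> H. card (Y \<inter> L) \<le> 1}"

definition quad_extensions :: "'a set \<Rightarrow> 'a set set set" where
  "quad_extensions E = {add_line (insert x T) H |H T x.
     H \<in> linear_triple_systems E \<and> T \<in> H \<and> x \<in> E - T}"

lemma finite_linear_triple_systems: "finite E \<Longrightarrow> finite (linear_triple_systems E)"
  unfolding linear_triple_systems_def
  by (rule finite_subset[of _ "Pow (triples E)"]) (auto simp: finite_triples)

lemma quad_extensionsE:
  assumes "G \<in> quad_extensions E"
  obtains L H where "G = insert L H" "L \<subseteq> E" "card L = 4" "H \<subseteq> triples E"
    "linear_family H" "\<forall>Y\<in>H. card (Y \<inter> L) \<le> 1"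
proof -
  obtain H T x where G: "G = add_line (insert x T) H" and H: "H \<in> linear_triple_systems E"
    and T: "T \<in> H" and x: "x \<in> E - T"
    using assms unfolding quad_extensions_def by blast
  have "T \<in> triples E" using H T unfolding linear_triple_systems_def by blast
  then have "insert x T \<subseteq> E" "card (insert x T) = 4" using x triplesD[of T E] by auto
  moreover have H': "H \<subseteq> triples E" "linear_family H"
    using H unfolding linear_triple_systems_def by auto
  moreover have "linear_family {Y \<in> H. card (Y \<inter> insert x T) \<le> 1}"
    using H'(2) by (rule linear_family_subset) blast
  ultimately show ?thesis
    by (intro that[of "insert x T" "{Y \<in> H. card (Y \<inter> insert x T) \<le> 1}"])
      (auto simp: G add_line_def)
qed

lemma finite_quad_extensions: "finite E \<Longrightarrow> finite (quad_extensions E)"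
proof (rule finite_subset[of _ "Pow (Pow E)"])
  show "quad_extensions E \<subseteq> Pow (Pow E)"
  proof
    fix G assume "G \<in> quad_extensions E"
    then obtain L H where "G = insert L H" "L \<subseteq> E" "H \<subseteq> triples E"
      by (rule quad_extensionsE)
    then show "G \<in> Pow (Pow E)" unfolding triples_def by blast
  qed
qed simp

lemma linear_triple_system_space:
  assumes "H \<in> linear_triple_systems E" "finite E" "4 \<le> card E"
  shows "partial_linear_space E H"
proof
  fix l assume "l \<in> H"
  then have "l \<subseteq> E" "card l = 3" using assms(1) triplesD unfolding linear_triple_systems_def by blast+
  then show "l \<subset> E" using assms(3) by auto
qed (use assms in \<open>auto simp: linear_triple_systems_def\<close>)

lemma quad_extension_space:
  assumes "G \<in> quad_extensions E" "finite E" "5 \<le> card E"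
  shows "partial_linear_space E G"
proof -
  obtain L H where G: "G = insert L H" "L \<subseteq> E" "card L = 4" "H \<subseteq> triples E"
    "linear_family H" "\<forall>Y\<in>H. card (Y \<inter> L) \<le> 1"
    using assms(1) by (rule quad_extensionsE)
  show ?thesis
  proof
    fix l assume "l \<in> G"
    then have "l \<subseteq> E" "card l \<le> 4" using G triplesD[of l E] by auto
    then show "l \<subset> E" using assms(3) by auto
  next
    show "linear_family G" using G linear_family_insert by blast
  qed (use assms in auto)
qed

lemma linear_triple_systems_quad_extensions_disjoint:
  "linear_triple_systems E \<inter> quad_extensions E = {}"
proof -
  have "G \<notin> quad_extensions E" if "G \<in> linear_triple_systems E" for G
  proof
    assume "G \<in> quad_extensions E"
    then obtain L H where "G = insert L H" "card L = 4" by (rule quad_extensionsE)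
    then show False using that triplesD unfolding linear_triple_systems_def by fastforce
  qed
  then show ?thesis by blast
qed

lemma triples_diff_line_bases_linear_triple_system:
  "H \<in> linear_triple_systems E \<Longrightarrow> triples E - line_bases E H = H"
  unfolding linear_triple_systems_def by (simp add: triples_diff_line_bases_triples)

lemma triples_diff_line_bases_insert_triples:
  "L \<subseteq> E \<Longrightarrow> H \<subseteq> triples E \<Longrightarrow> triples E - line_bases E (insert L H) = H \<union> triples L"
  by (simp add: triples_diff_line_bases_insert triples_diff_line_bases_triples)

lemma triples_Un_4set_inject:
  assumes "linear_family H1" "\<forall>Y\<in>H1. card (Y \<inter> L1) \<le> 1" "card L1 = 4"
    and "linear_family H2" "\<forall>Y\<in>H2. card (Y \<inter> L2) \<le> 1" "card L2 = 4"
    and eq: "H1 \<union> triples L1 = H2 \<union> triples L2"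
  shows "L1 = L2" "H1 = H2"
proof -
  show L: "L1 = L2"
    using triples_of_4set_subset[of H1 L1 L2] triples_of_4set_subset[of H2 L2 L1] assms
    by (metis Un_upper2 subset_antisym)
  have "H \<inter> triples L = {}" if "\<forall>Y\<in>H. card (Y \<inter> L) \<le> 1" for H and L :: "'a set"
    using that unfolding triples_def by (auto simp: Int_absorb2)
  then show "H1 = H2" using eq L assms(2,5) by blast
qed

lemma line_bases_linear_triple_system_neq_quad_extension:
  assumes H: "H \<in> linear_triple_systems E" and G: "G \<in> quad_extensions E"
  shows "line_bases E H \<noteq> line_bases E G"
proof
  assume eq: "line_bases E H = line_bases E G"
  obtain L H' where "G = insert L H'" "L \<subseteq> E" "card L = 4" "H' \<subseteq> triples E"
    using G by (rule quad_extensionsE)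
  then have "H' \<union> triples L = H"
    using eq triples_diff_line_bases_linear_triple_system[OF H]
      triples_diff_line_bases_insert_triples[of L E H'] by simp
  then have "triples L \<subseteq> H" by blast
  then show False using H triples_of_4set_not_linear \<open>card L = 4\<close>
    unfolding linear_triple_systems_def by blast
qed

lemma inj_on_line_bases_quad_extensions: "inj_on (line_bases E) (quad_extensions E)"
proof (rule inj_onI)
  fix G1 G2 assume G1: "G1 \<in> quad_extensions E" and G2: "G2 \<in> quad_extensions E"
    and eq: "line_bases E G1 = line_bases E G2"
  obtain L1 H1 where 1: "G1 = insert L1 H1" "L1 \<subseteq> E" "card L1 = 4" "H1 \<subseteq> triples E"
    "linear_family H1" "\<forall>Y\<in>H1. card (Y \<inter> L1) \<le> 1"
    using G1 by (rule quad_extensionsE)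
  obtain L2 H2 where 2: "G2 = insert L2 H2" "L2 \<subseteq> E" "card L2 = 4" "H2 \<subseteq> triples E"
    "linear_family H2" "\<forall>Y\<in>H2. card (Y \<inter> L2) \<le> 1"
    using G2 by (rule quad_extensionsE)
  have "H1 \<union> triples L1 = H2 \<union> triples L2"
    using eq triples_diff_line_bases_insert_triples 1 2 by metis
  then show "G1 = G2" using triples_Un_4set_inject[of H1 L1 H2 L2] 1 2 by simp
qed

lemma inj_on_line_bases:
  "inj_on (line_bases E) (linear_triple_systems E \<union> quad_extensions E)"
proof -
  have "inj_on (line_bases E) (linear_triple_systems E)"
    by (rule inj_onI) (metis triples_diff_line_bases_linear_triple_system)
  moreover have "line_bases E ` linear_triple_systems E \<inter> line_bases E ` quad_extensions E = {}"
    using line_bases_linear_triple_system_neq_quad_extension by fastforce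
  ultimately show ?thesis
    by (auto simp: inj_on_Un inj_on_line_bases_quad_extensions)
qed

lemma finite_matroids: "finite E \<Longrightarrow> finite {\<B>. matroid_bases E \<B> \<and> P \<B>}"
  by (rule finite_subset[of _ "Pow (Pow E)"]) (auto simp: matroid_bases_def)

lemma card_paving_rank3_ge:
  assumes "finite E" "5 \<le> card E"
  shows "card (linear_triple_systems E) + card (quad_extensions E)
    \<le> card {\<B>. matroid_bases E \<B> \<and> has_rank \<B> 3 \<and> paving E \<B> 3}"
proof -
  have "partial_linear_space E G" if "G \<in> linear_triple_systems E \<union> quad_extensions E" for G
    using that assms linear_triple_system_space quad_extension_space by fastforce
  then have "line_bases E ` (linear_triple_systems E \<union> quad_extensions E)
      \<subseteq> {\<B>. matroid_bases E \<B> \<and> has_rank \<B> 3 \<and> paving E \<B> 3}"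
    using partial_linear_space.line_bases_matroid partial_linear_space.line_bases_paving
      has_rank_line_bases by blast
  then have "card (line_bases E ` (linear_triple_systems E \<union> quad_extensions E))
      \<le> card {\<B>. matroid_bases E \<B> \<and> has_rank \<B> 3 \<and> paving E \<B> 3}"
    by (intro card_mono finite_matroids assms(1))
  also have "card (line_bases E ` (linear_triple_systems E \<union> quad_extensions E))
      = card (linear_triple_systems E) + card (quad_extensions E)"
    by (simp add: card_image[OF inj_on_line_bases] card_Un_disjoint assms(1)
        finite_linear_triple_systems finite_quad_extensions
        linear_triple_systems_quad_extensions_disjoint)
  finally show ?thesis .
qed

lemma card_sparse_paving_rank3_le:
  assumes "finite E"
  shows "card {\<B>. matroid_bases E \<B> \<and> has_rank \<B> 3 \<and> sparse_paving E \<B> 3}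
    \<le> card (linear_triple_systems E)"
proof -
  have "\<B> \<in> line_bases E ` linear_triple_systems E"
    if "matroid_bases E \<B>" "has_rank \<B> 3" "sparse_paving E \<B> 3" for \<B>
  proof
    have "\<B> \<subseteq> triples E"
      using that(1,2) unfolding matroid_bases_def has_rank_def triples_def by blast
    then show "\<B> = line_bases E (triples E - \<B>)" by (simp add: line_bases_nonbases)
    show "triples E - \<B> \<in> linear_triple_systems E"
      using sparse_paving_nonbases_linear[OF that] unfolding linear_triple_systems_def by blast
  qed
  then have "card {\<B>. matroid_bases E \<B> \<and> has_rank \<B> 3 \<and> sparse_paving E \<B> 3}
      \<le> card (line_bases E ` linear_triple_systems E)"
    by (intro card_mono) (auto simp: assms finite_linear_triple_systems)
  also have "\<dots> \<le> card (linear_triple_systems E)"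
    by (intro card_image_le finite_linear_triple_systems assms)
  finally show ?thesis .
qed

lemma sparse_paving_rank3_exists:
  assumes "finite E" "3 \<le> card E"
  shows "0 < card {\<B>. matroid_bases E \<B> \<and> has_rank \<B> 3 \<and> sparse_paving E \<B> 3}"
proof -
  interpret partial_linear_space E "{}"
    using assms by unfold_locales (auto simp: linear_family_def)
  have "sparse_paving E (line_bases E {}) 3"
    unfolding sparse_paving_def line_bases_def triples_def by simp
  then have "line_bases E {} \<in> {\<B>. matroid_bases E \<B> \<and> has_rank \<B> 3 \<and> sparse_paving E \<B> 3}"
    using line_bases_matroid has_rank_line_bases by blast
  then show ?thesis using finite_matroids[OF assms(1)] by (simp add: card_gt_0_iff) blast
qed

section \<open>Typical linear triple systems are large\<close>

definition free_triples :: "'a set \<Rightarrow> 'a set set \<Rightarrow> 'a set set" where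
  "free_triples E H = {T \<in> triples E. \<forall>X\<in>H. card (X \<inter> T) \<le> 1}"

lemma card_free_triples:
  assumes "finite E" "H \<in> linear_triple_systems E"
  shows "card (triples E) - 3 * card H * card E \<le> card (free_triples E H)"
proof -
  have H: "H \<subseteq> triples E" using assms(2) unfolding linear_triple_systems_def by blast
  then have "finite H" using assms(1) finite_subset finite_triples by blast
  let ?blocked = "\<Union>X\<in>H. {T \<in> triples E. 2 \<le> card (X \<inter> T)}"
  have "card ?blocked \<le> (\<Sum>X\<in>H. card {T \<in> triples E. 2 \<le> card (X \<inter> T)})"
    using \<open>finite H\<close> by (rule card_UN_le)
  also have "\<dots> \<le> (\<Sum>X\<in>H. 3 * card E)"
  proof (rule sum_mono)
    fix X assume "X \<in> H"
    then have "finite X" "card X = 3" using H triplesD by blast+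
    then show "card {T \<in> triples E. 2 \<le> card (X \<inter> T)} \<le> 3 * card E"
      using card_triples_meeting_in_two[OF assms(1), of X] by (simp add: choose_two)
  qed
  finally have "card ?blocked \<le> 3 * card H * card E" by simp
  moreover have "card (triples E) - card ?blocked \<le> card (triples E - ?blocked)"
    by (rule diff_card_le_card_Diff) (auto intro: finite_subset[OF _ finite_triples[OF assms(1)]])
  ultimately have "card (triples E) - 3 * card H * card E \<le> card (triples E - ?blocked)"
    by linarith
  moreover have "free_triples E H = triples E - ?blocked"
    unfolding free_triples_def by force
  ultimately show ?thesis by simp
qed

definition systems_of_size :: "'a set \<Rightarrow> nat \<Rightarrow> 'a set set set" where
  "systems_of_size E k = {H \<in> linear_triple_systems E. card H = k}"

lemma finite_systems_of_size: "finite E \<Longrightarrow> finite (systems_of_size E k)"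
  unfolding systems_of_size_def by (simp add: finite_linear_triple_systems)

lemma insert_free_triple:
  assumes "H \<in> linear_triple_systems E" "T \<in> free_triples E H"
  shows "insert T H \<in> linear_triple_systems E" "T \<notin> H"
proof -
  have T: "T \<in> triples E" "\<forall>Y\<in>H. card (Y \<inter> T) \<le> 1"
    using assms(2) unfolding free_triples_def by blast+
  then show "T \<notin> H" using triplesD[of T E] by fastforce
  show "insert T H \<in> linear_triple_systems E"
    using assms(1) T linear_family_insert unfolding linear_triple_systems_def by blast
qed

definition free_extension :: "'a set \<Rightarrow> 'a set set \<Rightarrow> 'a set set \<Rightarrow> bool" where
  "free_extension E H H' \<longleftrightarrow> (\<exists>T\<in>free_triples E H. H' = insert T H)"

lemma card_free_extensions_ge:
  assumes "finite E" "H \<in> systems_of_size E k"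
  shows "card (free_triples E H) \<le> card {H' \<in> systems_of_size E (Suc k). free_extension E H H'}"
proof -
  have H: "H \<in> linear_triple_systems E" "card H = k"
    using assms(2) unfolding systems_of_size_def by auto
  then have "finite H"
    using assms(1) finite_triples finite_subset unfolding linear_triple_systems_def by blast
  have "(\<lambda>T. insert T H) ` free_triples E H
      \<subseteq> {H' \<in> systems_of_size E (Suc k). free_extension E H H'}"
    using insert_free_triple[OF H(1)] H(2) \<open>finite H\<close>
    unfolding systems_of_size_def free_extension_def by auto
  moreover have "inj_on (\<lambda>T. insert T H) (free_triples E H)"
    using insert_free_triple(2)[OF H(1)] by (intro inj_onI) blast
  moreover have "finite {H' \<in> systems_of_size E (Suc k). free_extension E H H'}"
    using finite_systems_of_size[OF assms(1)] by simp
  ultimately show ?thesis by (metis card_image card_mono)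
qed

lemma card_free_extension_sources_le:
  assumes "H' \<in> systems_of_size E (Suc k)"
  shows "card {H \<in> systems_of_size E k. free_extension E H H'} \<le> Suc k"
proof -
  have H': "finite H'" "card H' = Suc k"
    using assms unfolding systems_of_size_def by (auto intro: card_ge_0_finite)
  have "{H \<in> systems_of_size E k. free_extension E H H'} \<subseteq> (\<lambda>T. H' - {T}) ` H'"
  proof
    fix H assume "H \<in> {H \<in> systems_of_size E k. free_extension E H H'}"
    then obtain T where "H \<in> linear_triple_systems E" "T \<in> free_triples E H" "H' = insert T H"
      unfolding systems_of_size_def free_extension_def by blast
    then show "H \<in> (\<lambda>T. H' - {T}) ` H'" using insert_free_triple(2) by blast
  qed
  then have "card {H \<in> systems_of_size E k. free_extension E H H'} \<le> card ((\<lambda>T. H' - {T}) ` H')"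
    using H'(1) by (intro card_mono) simp_all
  also have "\<dots> \<le> Suc k" using card_image_le[OF H'(1)] H'(2) by simp
  finally show ?thesis .
qed

lemma layer_growth:
  assumes "finite E"
  shows "card (systems_of_size E k) * (card (triples E) - 3 * k * card E)
    \<le> card (systems_of_size E (Suc k)) * Suc k"
proof -
  have "(\<Sum>H\<in>systems_of_size E k. card (triples E) - 3 * k * card E)
      \<le> card (systems_of_size E (Suc k)) * Suc k"
  proof (rule double_counting_le[where R = "free_extension E"])
    fix H assume H: "H \<in> systems_of_size E k"
    then have "card (triples E) - 3 * k * card E \<le> card (free_triples E H)"
      using card_free_triples[OF assms] unfolding systems_of_size_def by force
    also have "\<dots> \<le> card {H' \<in> systems_of_size E (Suc k). free_extension E H H'}"
      using assms H by (rule card_free_extensions_ge)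
    finally show "card (triples E) - 3 * k * card E
        \<le> card {H' \<in> systems_of_size E (Suc k). free_extension E H H'}" .
  qed (simp_all add: finite_systems_of_size assms card_free_extension_sources_le)
  then show ?thesis by simp
qed

lemma layer_doubling:
  assumes "finite E" "3 * k * card E + 2 * Suc k \<le> card (triples E)"
  shows "2 * card (systems_of_size E k) \<le> card (systems_of_size E (Suc k))"
proof -
  have "card (systems_of_size E k) * (2 * Suc k)
      \<le> card (systems_of_size E k) * (card (triples E) - 3 * k * card E)"
    using assms(2) by (intro mult_le_mono2) linarith
  also have "\<dots> \<le> card (systems_of_size E (Suc k)) * Suc k"
    using assms(1) by (rule layer_growth)
  finally have "2 * card (systems_of_size E k) * Suc k \<le> card (systems_of_size E (Suc k)) * Suc k"
    by (simp add: ac_simps)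
  then show ?thesis by (metis mult_le_cancel2 zero_less_Suc)
qed

lemma mean_size_bound:
  assumes "finite E"
    and doubling: "\<forall>k<m. 2 * card (systems_of_size E k) \<le> card (systems_of_size E (Suc k))"
  shows "m * card (linear_triple_systems E) \<le> 2 * (\<Sum>H\<in>linear_triple_systems E. card H)"
proof -
  let ?small = "{H \<in> linear_triple_systems E. card H < m}"
    and ?big = "{H \<in> linear_triple_systems E. m \<le> card H}"
  have fin: "finite ?small" "finite ?big"
    using finite_linear_triple_systems[OF assms(1)] by simp_all
  have partial_sums: "(\<Sum>k<j. card (systems_of_size E k)) \<le> card (systems_of_size E j)"
    if "j \<le> m" for j
    using that
  proof (induction j)
    case (Suc j)
    then have "2 * card (systems_of_size E j) \<le> card (systems_of_size E (Suc j))"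
      using doubling by simp
    with Suc show ?case by simp
  qed simp
  have "?small = (\<Union>k<m. systems_of_size E k)" unfolding systems_of_size_def by blast
  then have "card ?small = (\<Sum>k<m. card (systems_of_size E k))"
    by (simp only:) (rule card_UN_disjoint, simp, simp add: finite_systems_of_size assms(1),
        auto simp: systems_of_size_def)
  also have "\<dots> \<le> card (systems_of_size E m)" by (rule partial_sums) simp
  also have "\<dots> \<le> card ?big"
    using fin(2) by (intro card_mono) (auto simp: systems_of_size_def)
  finally have "card ?small \<le> card ?big" .
  moreover have "card (linear_triple_systems E) = card ?small + card ?big"
    by (subst card_Un_disjoint[OF fin, symmetric]) (auto intro: arg_cong[where f = card])
  ultimately have "m * card (linear_triple_systems E) \<le> 2 * (m * card ?big)" by simp
  also have "m * card ?big = (\<Sum>H\<in>?big. m)" by simp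
  also have "\<dots> \<le> (\<Sum>H\<in>?big. card H)" by (rule sum_mono) simp
  also have "\<dots> \<le> (\<Sum>H\<in>linear_triple_systems E. card H)"
    by (rule sum_mono2[OF finite_linear_triple_systems[OF assms(1)]]) auto
  finally show ?thesis by simp
qed

section \<open>Counting extensions\<close>

definition grows_into :: "'a set \<Rightarrow> 'a set set \<Rightarrow> 'a set set \<Rightarrow> bool" where
  "grows_into E H G \<longleftrightarrow> (\<exists>T\<in>H. \<exists>x\<in>E - T. G = add_line (insert x T) H)"

lemma add_line_cancel: "L1 \<notin> H \<Longrightarrow> add_line L1 H = add_line L2 H \<Longrightarrow> L1 = L2"
  unfolding add_line_def by blast

lemma inj_on_add_line_insert:
  assumes H: "H \<in> linear_triple_systems E"
  shows "inj_on (\<lambda>(T, x). add_line (insert x T) H) (SIGMA T:H. E - T)"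
proof (rule inj_onI, clarsimp)
  have HT: "H \<subseteq> triples E" and lin: "linear_family H"
    using H unfolding linear_triple_systems_def by auto
  fix T1 x1 T2 x2 assume T1: "T1 \<in> H" "x1 \<notin> T1" and T2: "T2 \<in> H" "x2 \<notin> T2"
    and eq: "add_line (insert x1 T1) H = add_line (insert x2 T2) H"
  have t1: "finite T1" "card T1 = 3" and t2: "finite T2" "card T2 = 3"
    using T1(1) T2(1) HT triplesD by blast+
  have "insert x1 T1 \<notin> H" using HT triplesD[of "insert x1 T1" E] t1 T1(2) by auto
  then have L: "insert x1 T1 = insert x2 T2" using eq by (rule add_line_cancel)
  have "T1 \<union> T2 \<subseteq> insert x1 T1" using L by blast
  then have "card (T1 \<union> T2) \<le> card (insert x1 T1)" using t1 by (intro card_mono) simp_all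
  then have "card (T1 \<union> T2) \<le> 4" using t1 T1(2) by simp
  then have "2 \<le> card (T1 \<inter> T2)" using two_triples_in_4set_meet t1 t2 by blast
  then have "T1 = T2" using linear_familyD[OF lin T1(1) T2(1)] by fastforce
  with L T1(2) T2(2) show "T1 = T2 \<and> x1 = x2" by blast
qed

lemma card_grows_into_ge:
  assumes "finite E" and H: "H \<in> linear_triple_systems E"
  shows "card H * (card E - 3) \<le> card {G \<in> quad_extensions E. grows_into E H G}"
proof -
  have HT: "H \<subseteq> triples E" using H unfolding linear_triple_systems_def by auto
  have "finite H" using HT assms(1) finite_subset finite_triples by blast
  let ?S = "SIGMA T:H. E - T" and ?f = "\<lambda>(T, x). add_line (insert x T) H"
  have "card ?S = (\<Sum>T\<in>H. card (E - T))"
    using \<open>finite H\<close> assms(1) by (intro card_SigmaI) simp_all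
  also have "\<dots> = (\<Sum>T\<in>H. card E - 3)"
  proof (rule sum.cong)
    fix T assume "T \<in> H"
    then have "T \<subseteq> E" "finite T" "card T = 3" using triplesD[OF subsetD[OF HT]] by blast+
    then show "card (E - T) = card E - 3" by (simp add: card_Diff_subset)
  qed simp
  finally have "card H * (card E - 3) = card (?f ` ?S)"
    using card_image[OF inj_on_add_line_insert[OF H]] by simp
  also have "\<dots> \<le> card {G \<in> quad_extensions E. grows_into E H G}"
  proof (rule card_mono)
    show "finite {G \<in> quad_extensions E. grows_into E H G}"
      using finite_quad_extensions[OF assms(1)] by simp
    show "?f ` ?S \<subseteq> {G \<in> quad_extensions E. grows_into E H G}"
      using H unfolding quad_extensions_def grows_into_def by fast
  qed
  finally show ?thesis .
qed

lemma linear_system_decomposition: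
  assumes lin: "linear_family H" and T: "T \<in> H" "finite T" "2 \<le> card T"
  shows "H = insert T ((add_line (insert x T) H - {insert x T})
    \<union> {Y \<in> H. card (Y \<inter> insert x T) = 2})"
proof -
  have "card (Y \<inter> insert x T) \<le> 2" if "Y \<in> H" "Y \<noteq> T" for Y
    using card_Int_insert_le[OF T(2), of Y x] linear_familyD[OF lin that(1) T(1) that(2)] by simp
  moreover have "2 \<le> card (insert x T)" using T(2,3) by (simp add: card_insert_if)
  ultimately show ?thesis using T(1) unfolding add_line_def by fastforce
qed

lemma meets_extension_twice:
  assumes "linear_family H" "T \<in> H" "finite T" "card T = 3" "x \<notin> T"
    and Y: "Y \<in> H" "card (Y \<inter> insert x T) = 2"
  shows "x \<in> Y" "card (Y \<inter> T) = 1"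
proof -
  have "Y \<noteq> T" using Y(2) assms(3-5) by (auto simp: Int_absorb1)
  then have le1: "card (Y \<inter> T) \<le> 1" using linear_familyD[OF assms(1) Y(1) assms(2)] by blast
  moreover have "1 \<le> card (Y \<inter> T)" using card_Int_insert_le[OF assms(3), of Y x] Y(2) by simp
  ultimately show "card (Y \<inter> T) = 1" by simp
  show "x \<in> Y"
  proof (rule ccontr)
    assume "x \<notin> Y"
    then have "Y \<inter> insert x T = Y \<inter> T" by blast
    then show False using Y(2) le1 by simp
  qed
qed

lemma card_meeting_extension_twice:
  assumes H: "H \<in> linear_triple_systems E" and T: "T \<in> H" and x: "x \<notin> T"
  shows "card {Y \<in> H. card (Y \<inter> insert x T) = 2} \<le> 3"
proof -
  let ?D = "{Y \<in> H. card (Y \<inter> insert x T) = 2}"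
  have HT: "H \<subseteq> triples E" and lin: "linear_family H"
    using H unfolding linear_triple_systems_def by auto
  have t: "finite T" "card T = 3" using T HT triplesD by blast+
  have through_x: "x \<in> Y \<and> card (Y \<inter> T) = 1" if "Y \<in> ?D" for Y
  proof -
    have "Y \<in> H" "card (Y \<inter> insert x T) = 2" using that by simp_all
    from meets_extension_twice[OF lin T t x this] show ?thesis by blast
  qed
  have inj: "inj_on (\<lambda>Y. Y \<inter> T) ?D"
  proof (rule inj_onI, rule ccontr)
    fix Y1 Y2 assume Y1: "Y1 \<in> ?D" and Y2: "Y2 \<in> ?D" and eq: "Y1 \<inter> T = Y2 \<inter> T"
      and "Y1 \<noteq> Y2"
    then have le1: "card (Y1 \<inter> Y2) \<le> 1" using linear_familyD[OF lin] by blast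
    have "finite Y1" using Y1 HT triplesD by blast
    have "x \<notin> Y1 \<inter> T" using x by blast
    then have "card (insert x (Y1 \<inter> T)) = 2" using through_x[OF Y1] t by simp
    moreover have "x \<in> Y1" "x \<in> Y2" using through_x[OF Y1] through_x[OF Y2] by simp_all
    moreover have "Y1 \<inter> T \<subseteq> Y2 \<inter> T" by (simp add: eq)
    ultimately have "insert x (Y1 \<inter> T) \<subseteq> Y1 \<inter> Y2" by blast
    then have "card (insert x (Y1 \<inter> T)) \<le> card (Y1 \<inter> Y2)"
      using \<open>finite Y1\<close> by (intro card_mono) simp_all
    then have "2 \<le> card (Y1 \<inter> Y2)" using \<open>card (insert x (Y1 \<inter> T)) = 2\<close> by simp
    with le1 show False by linarith
  qed
  have "(\<lambda>Y. Y \<inter> T) ` ?D \<subseteq> {S. S \<subseteq> T \<and> card S = 1}"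
  proof (rule image_subsetI)
    fix Y assume "Y \<in> ?D"
    from through_x[OF this] show "Y \<inter> T \<in> {S. S \<subseteq> T \<and> card S = 1}" by simp
  qed
  moreover have "finite {S. S \<subseteq> T \<and> card S = 1}"
    by (rule finite_subset[of _ "Pow T"]) (use t(1) in auto)
  ultimately have "card ((\<lambda>Y. Y \<inter> T) ` ?D) \<le> card {S. S \<subseteq> T \<and> card S = 1}"
    by (rule card_mono[rotated])
  then have "card ?D \<le> card {S. S \<subseteq> T \<and> card S = 1}" by (simp only: card_image[OF inj])
  also have "\<dots> = 3" using n_subsets[OF t(1), of 1] t(2) by simp
  finally show ?thesis .
qed

lemma grows_into_source:
  assumes "grows_into E H G" "H \<in> linear_triple_systems E"
    and G: "G = insert L H'" "card L = 4" "H' \<subseteq> triples E"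
  obtains T D where "H = insert T ((G - {L}) \<union> D)" "T \<in> triples L"
    "D \<subseteq> {Y \<in> triples E. 2 \<le> card (L \<inter> Y)}" "card D \<le> 3"
proof -
  obtain T x where T: "T \<in> H" and x: "x \<in> E - T" and G_eq: "G = add_line (insert x T) H"
    using assms(1) unfolding grows_into_def by blast
  have HT: "H \<subseteq> triples E" and lin: "linear_family H"
    using assms(2) unfolding linear_triple_systems_def by auto
  have t: "finite T" "card T = 3" using T HT triplesD by blast+
  have "insert x T \<in> G" unfolding G_eq add_line_def by simp
  moreover have "card (insert x T) = 4" using t x by simp
  ultimately have xT: "insert x T = L" using G triplesD by fastforce
  let ?D = "{Y \<in> H. card (Y \<inter> insert x T) = 2}"
  have "2 \<le> card T" using t(2) by simp
  from linear_system_decomposition[OF lin T t(1) this, of x]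
  have "H = insert T ((G - {L}) \<union> ?D)" unfolding G_eq xT by simp
  moreover have "T \<in> triples L" using xT t(2) unfolding triples_def by blast
  moreover have "?D \<subseteq> {Y \<in> triples E. 2 \<le> card (L \<inter> Y)}"
    using HT xT by (auto simp: Int_commute)
  moreover have "card ?D \<le> 3" using card_meeting_extension_twice[OF assms(2) T] x by simp
  ultimately show ?thesis by (rule that)
qed

lemma card_grows_into_le:
  assumes "finite E" and G: "G \<in> quad_extensions E"
  shows "card {H \<in> linear_triple_systems E. grows_into E H G} \<le> 4 * (6 * card E + 1) ^ 3"
proof -
  obtain L H' where L: "G = insert L H'" "L \<subseteq> E" "card L = 4" "H' \<subseteq> triples E"
    using G by (rule quad_extensionsE)
  have "finite L" using L(3) by (intro card_ge_0_finite) simp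
  let ?C = "{Y \<in> triples E. 2 \<le> card (L \<inter> Y)}"
  let ?Ds = "{D. D \<subseteq> ?C \<and> card D \<le> 3}"
  let ?g = "\<lambda>(T, D). insert T ((G - {L}) \<union> D)"
  have "{H \<in> linear_triple_systems E. grows_into E H G} \<subseteq> ?g ` (triples L \<times> ?Ds)"
  proof
    fix H assume "H \<in> {H \<in> linear_triple_systems E. grows_into E H G}"
    then have "grows_into E H G" "H \<in> linear_triple_systems E" by simp_all
    then obtain T D
      where "H = insert T ((G - {L}) \<union> D)" "T \<in> triples L" "D \<subseteq> ?C" "card D \<le> 3"
      by (rule grows_into_source[OF _ _ L(1,3,4)])
    then show "H \<in> ?g ` (triples L \<times> ?Ds)" by (intro image_eqI[of _ _ "(T, D)"]) auto
  qed
  moreover have "finite (triples L \<times> ?Ds)"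
    using \<open>finite L\<close> assms(1) by (auto simp: finite_triples)
  ultimately have "card {H \<in> linear_triple_systems E. grows_into E H G} \<le> card (triples L \<times> ?Ds)"
    using card_image_le card_mono finite_imageI le_trans by meson
  also have "\<dots> = 4 * card ?Ds"
    using n_subsets[OF \<open>finite L\<close>, of 3] L(3) binomial_symmetric[of 3 4]
    by (simp add: card_cartesian_product triples_def)
  also have "\<dots> \<le> 4 * (card ?C + 1) ^ 3"
    using card_subsets_card_le[of ?C 3] assms(1) by (simp add: finite_triples)
  also have "\<dots> \<le> 4 * (6 * card E + 1) ^ 3"
    using card_triples_meeting_in_two[OF assms(1) \<open>finite L\<close>] L(3)
    by (simp add: choose_two power_mono)
  finally show ?thesis .
qed

lemma sum_card_linear_triple_systems_le:
  assumes "finite E"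
  shows "(\<Sum>H\<in>linear_triple_systems E. card H) * (card E - 3)
    \<le> card (quad_extensions E) * (4 * (6 * card E + 1) ^ 3)"
proof -
  have "(\<Sum>H\<in>linear_triple_systems E. card H * (card E - 3))
      \<le> card (quad_extensions E) * (4 * (6 * card E + 1) ^ 3)"
    by (intro double_counting_le[where R = "grows_into E"] finite_linear_triple_systems
        finite_quad_extensions card_grows_into_ge card_grows_into_le assms)
  then show ?thesis by (simp add: sum_distrib_right)
qed

section \<open>The ratio\<close>

lemma cube_le_27_choose_3: "3 \<le> n \<Longrightarrow> n ^ 3 \<le> 27 * (n choose 3)"
proof -
  assume "3 \<le> n"
  then have "(real n / 3) ^ 3 \<le> real (n choose 3)"
    using binomial_ge_n_over_k_pow_k[of 3 n] by simp
  then have "real (n ^ 3) \<le> real (27 * (n choose 3))" by (simp add: power_divide)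
  then show ?thesis by (simp only: of_nat_le_iff)
qed

lemma layer_doubling_condition:
  assumes n: "5 \<le> n" and k: "k < n * n div 200"
  shows "3 * k * n + 2 * Suc k \<le> n choose 3"
proof -
  have k2: "200 * k \<le> n * n" using k by linarith
  have kn: "200 * k * n \<le> n * n * n" using mult_le_mono1[OF k2] by simp
  have n2: "25 \<le> n * n" using mult_le_mono[OF n n] by simp
  have n3: "5 * (n * n) \<le> n * n * n" using mult_le_mono1[OF n, of "n * n"] by (simp add: ac_simps)
  have "200 * (3 * k * n + 2 * Suc k) = 3 * (200 * k * n) + 2 * (200 * k) + 400" by simp
  also have "\<dots> \<le> 3 * (n * n * n) + 2 * (n * n) + 400" using kn k2 by linarith
  finally have "27 * (200 * (3 * k * n + 2 * Suc k)) \<le> 27 * (3 * (n * n * n) + 2 * (n * n) + 400)"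
    by simp
  also have "\<dots> \<le> 200 * (n * n * n)"
  proof -
    have "27 * (3 * a + 2 * b + 400) \<le> 200 * a" if "5 * b \<le> a" "25 \<le> b" for a b :: nat
    proof -
      have "54 * b \<le> 11 * a" "10800 \<le> 87 * a" using that by linarith+
      then show ?thesis by simp
    qed
    from this[OF n3 n2] show ?thesis .
  qed
  also have "\<dots> \<le> 200 * (27 * (n choose 3))"
    using cube_le_27_choose_3[of n] n by (simp add: power3_eq_cube)
  finally show ?thesis by simp
qed

lemma cubic_le_quadratic_mult_linear:
  assumes n: "1000 \<le> (n::nat)"
  shows "8 * (6 * n + 1) ^ 3 \<le> 10^7 * ((n - 3) * (n * n div 200))"
proof -
  define m where "m = n * n div 200"
  define k where "k = n - 3"
  have "n * n \<le> 200 * m + 199" unfolding m_def by linarith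
  moreover have "1000 * 1000 \<le> n * n" using mult_le_mono[OF n n] .
  ultimately have q2: "n * n \<le> 400 * m" by linarith
  have q3: "n \<le> 2 * k" using n unfolding k_def by linarith
  have "n * (n * n) \<le> (2 * k) * (400 * m)" by (rule mult_le_mono[OF q3 q2])
  then have q4: "n * (n * n) \<le> 800 * (k * m)" by (simp add: ac_simps)
  have "6 * n + 1 \<le> 7 * n" using n by linarith
  then have "(6 * n + 1) ^ 3 \<le> (7 * n) ^ 3" by (rule power_mono) simp
  also have "\<dots> = 343 * (n * (n * n))" by (simp add: power3_eq_cube)
  finally have "8 * (6 * n + 1) ^ 3 \<le> 2744 * (n * (n * n))" by simp
  also have "\<dots> \<le> 10^7 * (k * m)" using q4 by simp
  finally show ?thesis unfolding m_def k_def .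
qed

lemma card_linear_triple_systems_le:
  assumes "finite E" "1000 \<le> card E"
  shows "card (linear_triple_systems E) \<le> 10^7 * card (quad_extensions E)"
proof -
  define n where "n = card E"
  define m where "m = n * n div 200"
  define S where "S = (\<Sum>H\<in>linear_triple_systems E. card H)"
  have "\<forall>k<m. 2 * card (systems_of_size E k) \<le> card (systems_of_size E (Suc k))"
    using layer_doubling[OF assms(1)] layer_doubling_condition assms(2) card_triples[OF assms(1)]
    unfolding m_def n_def by simp
  then have "m * card (linear_triple_systems E) \<le> 2 * S"
    unfolding S_def using assms(1) by (rule mean_size_bound[rotated])
  then have "((n - 3) * m) * card (linear_triple_systems E) \<le> 2 * (S * (n - 3))"
    by (metis mult.assoc mult.commute mult_le_mono2)
  also have "\<dots> \<le> (8 * (6 * n + 1) ^ 3) * card (quad_extensions E)"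
    using sum_card_linear_triple_systems_le[OF assms(1)] unfolding S_def n_def by simp
  also have "\<dots> \<le> (10^7 * ((n - 3) * m)) * card (quad_extensions E)"
    using cubic_le_quadratic_mult_linear assms(2) unfolding m_def n_def by (intro mult_le_mono1) simp
  finally have "((n - 3) * m) * card (linear_triple_systems E)
      \<le> ((n - 3) * m) * (10^7 * card (quad_extensions E))" by (simp add: ac_simps)
  moreover have "0 < (n - 3) * m"
  proof -
    have "1000 \<le> n" using assms(2) unfolding n_def .
    then have "1000 * 1000 \<le> n * n" using mult_le_mono by blast
    then have "0 < m" unfolding m_def by (simp add: div_greater_zero_iff)
    with \<open>1000 \<le> n\<close> show ?thesis by simp
  qed
  ultimately show ?thesis by simp
qed

lemma paving_sparse_paving_ratio:
  assumes "1000 \<le> n"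
  shows "1 + 1 / 10^7 \<le> real (p_count n 3) / real (s_count n 3)"
proof -
  let ?E = "{1..n}"
  have E: "finite ?E" "1000 \<le> card ?E" using assms by simp_all
  have "5 \<le> card ?E" "3 \<le> card ?E" using E(2) by linarith+
  have p: "card (linear_triple_systems ?E) + card (quad_extensions ?E) \<le> p_count n 3"
    unfolding p_count_def by (rule card_paving_rank3_ge[OF E(1) \<open>5 \<le> card ?E\<close>])
  have s: "s_count n 3 \<le> card (linear_triple_systems ?E)" "0 < s_count n 3"
    unfolding s_count_def
    by (rule card_sparse_paving_rank3_le[OF E(1)],
        rule sparse_paving_rank3_exists[OF E(1) \<open>3 \<le> card ?E\<close>])
  have "real (card (linear_triple_systems ?E)) \<le> 10^7 * real (card (quad_extensions ?E))"
    using card_linear_triple_systems_le[OF E] by (simp add: of_nat_le_iff[symmetric])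
  then have "(1 + 1 / 10^7) * real (s_count n 3) \<le> real (p_count n 3)"
    using p s(1) by (simp add: algebra_simps)
  then show ?thesis using s(2) by (simp add: pos_le_divide_eq)
qed

theorem theorem1p6:
  shows "liminf (\<lambda>n. ereal (real (p_count n 3) / real (s_count n 3))) > 1"
proof -
  have "\<forall>\<^sub>F n in sequentially.
      ereal (1 + 1 / 10^7) \<le> ereal (real (p_count n 3) / real (s_count n 3))"
    using paving_sparse_paving_ratio by (auto simp: eventually_sequentially)
  then have "ereal (1 + 1 / 10^7) \<le> liminf (\<lambda>n. ereal (real (p_count n 3) / real (s_count n 3)))"
    by (rule Liminf_bounded)
  then show ?thesis by (rule less_le_trans[rotated]) simp
qed

end
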